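(* Consider an anode solution with active-layer boundary $-h_a\in(-h_3,-h_1)$ in the classical formulation, i.e. with $\eta=s_a$, and assume $j_{\mathrm{cell}}>0$. Then there exists $\varepsilon>0$ such that $\eta(y)<0$ for all $y\in(-h_a,-h_a+\varepsilon)$. Consequently the anodic charge-transfer current is negative on $(-h_a,-h_a+\varepsilon)$.
   Context: Anode model (isothermal, 1D). Fix real numbers $0<h_1<h_a<h_3$ and positive constants $\sigma_{\mathrm{el}},\sigma_{\mathrm{ion}}$ (effective conductivities), $\rho_f$ (fuel density), $D_1$ (effective diffusion coefficient), $M_{H_2}$ and $M_{H_2O}$ (molar masses), $F,R,T$ (Faraday constant, gas constant, temperature) and $l>0$. Also fix $j_{\mathrm{cell}}>0$, $V_3\in\mathbb R$ and bulk mass fractions $C_{H_2}^{\mathrm{bulk}},C_{H_2O}^{\mathrm{bulk}}\in(0,1)$. Define the signed quantity $$s_a=\phi_{\mathrm{el}}-\phi_{\mathrm{ion}}-\frac{RT}{2F}\ln\Big(\frac{C_{H_2}^{\mathrm{bulk}}}{C_{H_2}}\cdot\frac{C_{H_2O}}{C_{H_2O}^{\mathrm{bulk}}}\Big).$$ The activation overpotential is $\eta=s_a$ in the classical formulation and $\eta=|s_a|$ in the modified formulation. Charge-transfer current. For $y\in(-h_a,-h_1)$ set $$i=l\,i_0\Big[\exp\Big(\frac{2F\eta}{RT}\Big)-\exp\Big(-\frac{F\eta}{RT}\Big)\Big],\qquad i_0=32.4\,p_{H_2}^{-0.03}p_{H_2O}^{0.4}e^{-152155/(RT)},$$ where $p_{H_2}=\rho_fRTC_{H_2}/M_{H_2}$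 and $p_{H_2O}=\rho_fRTC_{H_2O}/M_{H_2O}$. An anode solution with active-layer boundary $-h_a$ is a tuple $\phi_{\mathrm{el}},\phi_{\mathrm{ion}},C_{H_2},C_{H_2O}\in C^1([-h_3,-h_1])$ with the following properties. - Regularity: each function is $C^2$ on $[-h_3,-h_a]$ and on $[-h_a,-h_1]$, and $C_{H_2},C_{H_2O}>0$. - Equations on $(-h_a,-h_1)$: $(\sigma_{\mathrm{el}}\phi_{\mathrm{el}}')'=i$, $(\sigma_{\mathrm{ion}}\phi_{\mathrm{ion}}')'=-i$, $(\rho_fD_1C_{H_2}')'=\frac{M_{H_2}}{2F}i$ and $(\rho_fD_1C_{H_2O}')'=-\frac{M_{H_2O}}{2F}i$. - Equations on $(-h_3,-h_a)$: all four left-hand sides vanish. - Boundary conditions at $-h_3$: $-\sigma_{\mathrm{el}}\phi_{\mathrm{el}}'(-h_3)=j_{\mathrm{cell}}$, $\phi_{\mathrm{ion}}'(-h_3)=0$, $\phi_{\mathrm{el}}(-h_3)=V_3$, $C_{H_2}(-h_3)=C_{H_2}^{\mathrm{bulk}}$, $C_{H_2O}(-h_3)=C_{H_2O}^{\mathrm{bulk}}$. - Boundary conditions at $-h_1$: $\phi_{\mathrm{el}}'(-h_1)=0$, $-\sigma_{\mathrm{ion}}\phi_{\mathrm{ion}}'(-h_1)=j_{\mathrm{cell}}$, $C_{H_2}'(-h_1)=C_{H_2O}'(-h_1)=0$. - Interface condition: $s_a(-h_a)=0$. *)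

theory Defs
  imports "HOL-Analysis.Analysis"
begin

definition C1_on :: "real set \<Rightarrow> (real \<Rightarrow> real) \<Rightarrow> (real \<Rightarrow> real) \<Rightarrow> bool" where
  "C1_on S f f' \<longleftrightarrow> (\<forall>y\<in>S. (f has_real_derivative f' y) (at y within S)) \<and> continuous_on S f'"

definition pw_C2 :: "real \<Rightarrow> real \<Rightarrow> real \<Rightarrow> (real \<Rightarrow> real) \<Rightarrow> (real \<Rightarrow> real)
    \<Rightarrow> (real \<Rightarrow> real) \<Rightarrow> (real \<Rightarrow> real) \<Rightarrow> bool" where
  "pw_C2 a b c f f' f1 f2 \<longleftrightarrow> C1_on {a..c} f f' \<and> C1_on {a..b} f' f1 \<and> C1_on {b..c} f' f2"

definition s_a :: "real \<Rightarrow> real \<Rightarrow> real \<Rightarrow> real \<Rightarrow> real \<Rightarrow> real \<Rightarrow> real \<Rightarrow> real \<Rightarrow> real \<Rightarrow> real" where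
  "s_a F R T CbH2 CbH2O phi_el phi_ion CH2 CH2O =
     phi_el - phi_ion - R * T / (2 * F) * ln ((CbH2 / CH2) * (CH2O / CbH2O))"

definition exchange_current :: "real \<Rightarrow> real \<Rightarrow> real \<Rightarrow> real \<Rightarrow> real \<Rightarrow> real \<Rightarrow> real \<Rightarrow> real" where
  "exchange_current rho_f R T MH2 MH2O CH2 CH2O =
     (let pH2 = rho_f * R * T * CH2 / MH2; pH2O = rho_f * R * T * CH2O / MH2O
      in 32.4 * pH2 powr (-0.03) * pH2O powr 0.4 * exp (- 152155 / (R * T)))"

definition ct_current :: "real \<Rightarrow> real \<Rightarrow> real \<Rightarrow> real \<Rightarrow> real \<Rightarrow> real \<Rightarrow> real \<Rightarrow> real \<Rightarrow> real \<Rightarrow> real \<Rightarrow> real" where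
  "ct_current l F rho_f R T MH2 MH2O CH2 CH2O eta =
     l * exchange_current rho_f R T MH2 MH2O CH2 CH2O
       * (exp (2 * F * eta / (R * T)) - exp (- F * eta / (R * T)))"

definition anode_solution_classical ::
  "real \<Rightarrow> real \<Rightarrow> real \<Rightarrow> real \<Rightarrow> real \<Rightarrow> real \<Rightarrow> real \<Rightarrow> real \<Rightarrow> real \<Rightarrow> real
   \<Rightarrow> real \<Rightarrow> real \<Rightarrow> real \<Rightarrow> real \<Rightarrow> real \<Rightarrow> real \<Rightarrow> real
   \<Rightarrow> (real \<Rightarrow> real) \<Rightarrow> (real \<Rightarrow> real) \<Rightarrow> (real \<Rightarrow> real) \<Rightarrow> (real \<Rightarrow> real) \<Rightarrow> bool" where
  "anode_solution_classical h1 ha h3 sig_el sig_ion rho_f D1 MH2 MH2O F R T l jcell V3 CbH2 CbH2O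
      phi_el phi_ion CH2 CH2O \<longleftrightarrow>
   (let eta = (\<lambda>y. s_a F R T CbH2 CbH2O (phi_el y) (phi_ion y) (CH2 y) (CH2O y));
        i = (\<lambda>y. ct_current l F rho_f R T MH2 MH2O (CH2 y) (CH2O y) (eta y))
    in \<exists>el' el1 el2 ion' ion1 ion2 h' h1'' h2'' w' w1 w2.
      pw_C2 (-h3) (-ha) (-h1) phi_el el' el1 el2 \<and>
      pw_C2 (-h3) (-ha) (-h1) phi_ion ion' ion1 ion2 \<and>
      pw_C2 (-h3) (-ha) (-h1) CH2 h' h1'' h2'' \<and>
      pw_C2 (-h3) (-ha) (-h1) CH2O w' w1 w2 \<and>
      (\<forall>y\<in>{-h3..-h1}. CH2 y > 0 \<and> CH2O y > 0) \<and>
      (\<forall>y\<in>{-ha<..<-h1}.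
         sig_el * el2 y = i y \<and> sig_ion * ion2 y = - i y \<and>
         rho_f * D1 * h2'' y = MH2 / (2 * F) * i y \<and>
         rho_f * D1 * w2 y = - (MH2O / (2 * F)) * i y) \<and>
      (\<forall>y\<in>{-h3<..<-ha}.
         sig_el * el1 y = 0 \<and> sig_ion * ion1 y = 0 \<and>
         rho_f * D1 * h1'' y = 0 \<and> rho_f * D1 * w1 y = 0) \<and>
      - sig_el * el' (-h3) = jcell \<and> ion' (-h3) = 0 \<and> phi_el (-h3) = V3 \<and>
      CH2 (-h3) = CbH2 \<and> CH2O (-h3) = CbH2O \<and>
      el' (-h1) = 0 \<and> - sig_ion * ion' (-h1) = jcell \<and> h' (-h1) = 0 \<and> w' (-h1) = 0 \<and>
      eta (-ha) = 0)"

end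

theory Submission
  imports Defs
begin

text \<open>On the inactive layer the electronic and ionic fluxes are constant, and on the active layer
  the reaction terms cancel in the combinations sig_ion phi_ion' +- (2 F rho_f D1 / M) C'.
  Transporting the boundary fluxes to the interface -ha therefore gives phi_el' = -jcell / sig_el < 0,
  phi_ion' = 0, CH2' < 0 and CH2O' > 0 there, and each of these makes the derivative of s_a at -ha
  negative. Since s_a vanishes at -ha, it is negative just to the right of the interface, and the
  charge-transfer current has the sign of eta = s_a.\<close>

lemma C1_on_Icc_interior_DERIV:
  assumes "C1_on {a..b} f f'" "a < x" "x < b"
  shows "(f has_real_derivative f' x) (at x)"
  using assms at_within_Icc_at[of a x b] unfolding C1_on_def
  by (metis atLeastAtMost_iff less_imp_le)

lemma C1_on_zero_derivative_imp_eq: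
  assumes "a < b" "C1_on {a..b} f f'" "\<forall>x\<in>{a<..<b}. f' x = 0"
  shows "f b = f a"
proof (rule DERIV_isconst_end[OF \<open>a < b\<close>])
  show "continuous_on {a..b} f"
    using assms(2) unfolding C1_on_def
    by (meson DERIV_continuous continuous_on_eq_continuous_within)
  show "(f has_real_derivative 0) (at x)" if "a < x" "x < b" for x
    using C1_on_Icc_interior_DERIV[OF assms(2) that] assms(3) that by simp
qed

lemma C1_on_lincomb:
  assumes "C1_on S f f'" "C1_on S g g'"
  shows "C1_on S (\<lambda>x. p * f x + q * g x) (\<lambda>x. p * f' x + q * g' x)"
  using assms unfolding C1_on_def
  by (auto intro!: derivative_eq_intros continuous_intros)

lemma C1_on_first_integral:
  assumes "a < b" "C1_on {a..b} f f'" "C1_on {a..b} g g'"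
    and "\<forall>x\<in>{a<..<b}. p * f' x + q * g' x = 0"
  shows "p * f b + q * g b = p * f a + q * g a"
  using C1_on_zero_derivative_imp_eq[OF assms(1) C1_on_lincomb[OF assms(2,3)] assms(4)] .

lemma DERIV_neg_imp_neg_right:
  fixes f :: "real \<Rightarrow> real"
  assumes "(f has_real_derivative d) (at x)" "d < 0" "f x = 0"
  shows "\<exists>e>0. \<forall>y\<in>{x<..<x + e}. f y < 0"
proof -
  obtain e where "0 < e" and e: "\<And>t. 0 < t \<Longrightarrow> t < e \<Longrightarrow> f (x + t) < f x"
    using DERIV_neg_dec_right[OF assms(1,2)] by blast
  have "f y < 0" if "y \<in> {x<..<x + e}" for y
    using e[of "y - x"] that assms(3) by auto
  with \<open>0 < e\<close> show ?thesis by blast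
qed

lemma s_a_has_real_derivative:
  assumes "(phi_el has_real_derivative e) (at x within S)"
    and "(phi_ion has_real_derivative i) (at x within S)"
    and "(CH2 has_real_derivative h) (at x within S)"
    and "(CH2O has_real_derivative w) (at x within S)"
    and "0 < CbH2" "0 < CbH2O" "0 < CH2 x" "0 < CH2O x"
  shows "((\<lambda>y. s_a F R T CbH2 CbH2O (phi_el y) (phi_ion y) (CH2 y) (CH2O y))
           has_real_derivative e - i - R * T / (2 * F) * (w / CH2O x - h / CH2 x)) (at x within S)"
  unfolding s_a_def using assms
  by (cases "F = 0") (auto intro!: derivative_eq_intros simp: field_simps)

lemma exchange_current_pos:
  assumes "0 < rho_f" "0 < R" "0 < T" "0 < MH2" "0 < MH2O" "0 < CH2" "0 < CH2O"
  shows "0 < exchange_current rho_f R T MH2 MH2O CH2 CH2O"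
  using assms unfolding exchange_current_def Let_def by simp

lemma ct_current_neg_iff:
  assumes "0 < l" "0 < F" "0 < rho_f" "0 < R" "0 < T" "0 < MH2" "0 < MH2O" "0 < CH2" "0 < CH2O"
  shows "ct_current l F rho_f R T MH2 MH2O CH2 CH2O eta < 0 \<longleftrightarrow> eta < 0"
proof -
  have "0 < exchange_current rho_f R T MH2 MH2O CH2 CH2O"
    using assms exchange_current_pos by simp
  then have "ct_current l F rho_f R T MH2 MH2O CH2 CH2O eta < 0 \<longleftrightarrow>
      2 * F * eta / (R * T) < - F * eta / (R * T)"
    unfolding ct_current_def using \<open>0 < l\<close> by (auto simp: mult_less_0_iff)
  also have "\<dots> \<longleftrightarrow> eta < 0"
    using assms by (simp add: divide_simps mult_less_0_iff)
  finally show ?thesis .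
qed

lemma anode_solution_classical_interface_slopes:
  assumes "h1 < ha" "ha < h3"
    and "0 < sig_el" "0 < sig_ion" "0 < rho_f" "0 < D1" "0 < MH2" "0 < MH2O" "0 < F"
    and "anode_solution_classical h1 ha h3 sig_el sig_ion rho_f D1 MH2 MH2O F R T l jcell V3
           CbH2 CbH2O phi_el phi_ion CH2 CH2O"
  shows "(phi_el has_real_derivative - jcell / sig_el) (at (-ha))"
    and "(phi_ion has_real_derivative 0) (at (-ha))"
    and "(CH2 has_real_derivative - jcell * MH2 / (2 * F * rho_f * D1)) (at (-ha))"
    and "(CH2O has_real_derivative jcell * MH2O / (2 * F * rho_f * D1)) (at (-ha))"
proof -
  define cur where "cur = (\<lambda>y. ct_current l F rho_f R T MH2 MH2O (CH2 y) (CH2O y)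
    (s_a F R T CbH2 CbH2O (phi_el y) (phi_ion y) (CH2 y) (CH2O y)))"
  obtain el' el1 el2 ion' ion1 ion2 h' h1'' h2'' w' w1 w2 where
    el: "pw_C2 (-h3) (-ha) (-h1) phi_el el' el1 el2" and
    ion: "pw_C2 (-h3) (-ha) (-h1) phi_ion ion' ion1 ion2" and
    H2: "pw_C2 (-h3) (-ha) (-h1) CH2 h' h1'' h2''" and
    H2O: "pw_C2 (-h3) (-ha) (-h1) CH2O w' w1 w2" and
    active: "\<forall>y\<in>{-ha<..<-h1}. sig_el * el2 y = cur y \<and> sig_ion * ion2 y = - cur y \<and>
       rho_f * D1 * h2'' y = MH2 / (2 * F) * cur y \<and> rho_f * D1 * w2 y = - (MH2O / (2 * F)) * cur y" and
    inactive: "\<forall>y\<in>{-h3<..<-ha}. sig_el * el1 y = 0 \<and> sig_ion * ion1 y = 0 \<and>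
       rho_f * D1 * h1'' y = 0 \<and> rho_f * D1 * w1 y = 0" and
    "- sig_el * el' (-h3) = jcell" "ion' (-h3) = 0"
    "- sig_ion * ion' (-h1) = jcell" "h' (-h1) = 0" "w' (-h1) = 0"
    using assms(10) unfolding anode_solution_classical_def Let_def cur_def by blast
  have inactive_lt: "-h3 < -ha" and active_lt: "-ha < -h1"
    using assms by auto
  define k where "k = 2 * F * rho_f * D1"
  have "0 < k"
    using assms unfolding k_def by simp
  have "el' (-ha) = el' (-h3)"
    using C1_on_zero_derivative_imp_eq[OF inactive_lt, of el' el1] el inactive assms(3)
    unfolding pw_C2_def by simp
  then have el_slope: "el' (-ha) = - jcell / sig_el"
    using \<open>- sig_el * el' (-h3) = jcell\<close> assms(3) by (simp add: field_simps)
  have "ion' (-ha) = ion' (-h3)"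
    using C1_on_zero_derivative_imp_eq[OF inactive_lt, of ion' ion1] ion inactive assms(4)
    unfolding pw_C2_def by simp
  then have ion_slope: "ion' (-ha) = 0"
    using \<open>ion' (-h3) = 0\<close> by simp
  have "sig_ion * ion' (-h1) + k / MH2 * h' (-h1) = sig_ion * ion' (-ha) + k / MH2 * h' (-ha)"
    using C1_on_first_integral[OF active_lt, of ion' ion2 h' h2'' sig_ion "k / MH2"] ion H2 active assms
    unfolding pw_C2_def k_def by (auto simp: field_simps)
  then have H2_slope: "h' (-ha) = - jcell * MH2 / k"
    using \<open>- sig_ion * ion' (-h1) = jcell\<close> \<open>h' (-h1) = 0\<close> ion_slope \<open>0 < k\<close> assms(7)
    by (auto simp: field_simps)
  have "- sig_ion * ion' (-h1) + k / MH2O * w' (-h1) = - sig_ion * ion' (-ha) + k / MH2O * w' (-ha)"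
    using C1_on_first_integral[OF active_lt, of ion' ion2 w' w2 "- sig_ion" "k / MH2O"] ion H2O active assms
    unfolding pw_C2_def k_def by (auto simp: field_simps)
  then have H2O_slope: "w' (-ha) = jcell * MH2O / k"
    using \<open>- sig_ion * ion' (-h1) = jcell\<close> \<open>w' (-h1) = 0\<close> ion_slope \<open>0 < k\<close> assms(8)
    by (auto simp: field_simps)
  show "(phi_el has_real_derivative - jcell / sig_el) (at (-ha))"
    using C1_on_Icc_interior_DERIV[OF _ inactive_lt active_lt] el el_slope
    unfolding pw_C2_def by metis
  show "(phi_ion has_real_derivative 0) (at (-ha))"
    using C1_on_Icc_interior_DERIV[OF _ inactive_lt active_lt] ion ion_slope
    unfolding pw_C2_def by metis
  show "(CH2 has_real_derivative - jcell * MH2 / (2 * F * rho_f * D1)) (at (-ha))"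
    using C1_on_Icc_interior_DERIV[OF _ inactive_lt active_lt] H2 H2_slope
    unfolding pw_C2_def k_def by metis
  show "(CH2O has_real_derivative jcell * MH2O / (2 * F * rho_f * D1)) (at (-ha))"
    using C1_on_Icc_interior_DERIV[OF _ inactive_lt active_lt] H2O H2O_slope
    unfolding pw_C2_def k_def by metis
qed

lemma anode_solution_classical_s_a_DERIV_neg:
  assumes "h1 < ha" "ha < h3"
    and "0 < sig_el" "0 < sig_ion" "0 < rho_f" "0 < D1" "0 < MH2" "0 < MH2O"
    and "0 < F" "0 < R" "0 < T" "0 < jcell" "0 < CbH2" "0 < CbH2O"
    and "anode_solution_classical h1 ha h3 sig_el sig_ion rho_f D1 MH2 MH2O F R T l jcell V3
           CbH2 CbH2O phi_el phi_ion CH2 CH2O"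
  shows "\<exists>d<0. ((\<lambda>y. s_a F R T CbH2 CbH2O (phi_el y) (phi_ion y) (CH2 y) (CH2O y))
           has_real_derivative d) (at (-ha))"
proof -
  have "\<forall>y\<in>{-h3..-h1}. 0 < CH2 y \<and> 0 < CH2O y"
    using assms(15) unfolding anode_solution_classical_def Let_def by blast
  then have "0 < CH2 (-ha)" "0 < CH2O (-ha)"
    using assms(1,2) by auto
  define h' where "h' = - jcell * MH2 / (2 * F * rho_f * D1)"
  define w' where "w' = jcell * MH2O / (2 * F * rho_f * D1)"
  define d where "d = - jcell / sig_el - 0 - R * T / (2 * F) * (w' / CH2O (-ha) - h' / CH2 (-ha))"
  have "((\<lambda>y. s_a F R T CbH2 CbH2O (phi_el y) (phi_ion y) (CH2 y) (CH2O y))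
           has_real_derivative d) (at (-ha))"
    unfolding d_def h'_def w'_def
    using s_a_has_real_derivative[OF anode_solution_classical_interface_slopes[OF assms(1-9,15)]]
      assms(13,14) \<open>0 < CH2 (-ha)\<close> \<open>0 < CH2O (-ha)\<close> by blast
  moreover have "d < 0"
  proof -
    have "h' / CH2 (-ha) < 0" "0 < w' / CH2O (-ha)"
      unfolding h'_def w'_def using assms \<open>0 < CH2 (-ha)\<close> \<open>0 < CH2O (-ha)\<close>
      by (simp_all add: divide_neg_pos)
    then have "0 < R * T / (2 * F) * (w' / CH2O (-ha) - h' / CH2 (-ha))"
      using assms by simp
    moreover have "0 < jcell / sig_el"
      using assms by simp
    ultimately show ?thesis
      unfolding d_def by linarith
  qed
  ultimately show ?thesis
    by blast
qed

theorem mainTheorem3: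
  fixes h1 ha h3 sig_el sig_ion rho_f D1 MH2 MH2O F R T l jcell V3 CbH2 CbH2O :: real
    and phi_el phi_ion CH2 CH2O :: "real \<Rightarrow> real"
  assumes "0 < h1" "h1 < ha" "ha < h3"
    and "0 < sig_el" "0 < sig_ion" "0 < rho_f" "0 < D1" "0 < MH2" "0 < MH2O"
    and "0 < F" "0 < R" "0 < T" "0 < l" "0 < jcell"
    and "0 < CbH2" "CbH2 < 1" "0 < CbH2O" "CbH2O < 1"
    and "anode_solution_classical h1 ha h3 sig_el sig_ion rho_f D1 MH2 MH2O F R T l jcell V3
           CbH2 CbH2O phi_el phi_ion CH2 CH2O"
  shows "\<exists>\<epsilon>>0. \<forall>y\<in>{-ha<..<-ha+\<epsilon>}.
           s_a F R T CbH2 CbH2O (phi_el y) (phi_ion y) (CH2 y) (CH2O y) < 0 \<and>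
           ct_current l F rho_f R T MH2 MH2O (CH2 y) (CH2O y)
             (s_a F R T CbH2 CbH2O (phi_el y) (phi_ion y) (CH2 y) (CH2O y)) < 0"
proof -
  define eta where "eta = (\<lambda>y. s_a F R T CbH2 CbH2O (phi_el y) (phi_ion y) (CH2 y) (CH2O y))"
  have pos: "\<forall>y\<in>{-h3..-h1}. 0 < CH2 y \<and> 0 < CH2O y" and "eta (-ha) = 0"
    using assms(19) unfolding anode_solution_classical_def Let_def eta_def by blast+
  obtain d where "d < 0" and "(eta has_real_derivative d) (at (-ha))"
    using anode_solution_classical_s_a_DERIV_neg[OF assms(2-12,14,15,17,19)]
    unfolding eta_def by blast
  then obtain e where "0 < e" and eta_neg: "\<forall>y\<in>{-ha<..<-ha + e}. eta y < 0"
    using DERIV_neg_imp_neg_right[of eta d "-ha"] \<open>eta (-ha) = 0\<close> by blast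
  show ?thesis
  proof (intro exI[of _ "min e (ha - h1)"] conjI ballI)
    show "0 < min e (ha - h1)"
      using \<open>0 < e\<close> assms(2) by simp
    fix y assume y: "y \<in> {-ha<..<-ha + min e (ha - h1)}"
    then have "eta y < 0" and "0 < CH2 y" "0 < CH2O y"
      using eta_neg pos assms(3) by auto
    then show "s_a F R T CbH2 CbH2O (phi_el y) (phi_ion y) (CH2 y) (CH2O y) < 0"
      and "ct_current l F rho_f R T MH2 MH2O (CH2 y) (CH2O y)
             (s_a F R T CbH2 CbH2O (phi_el y) (phi_ion y) (CH2 y) (CH2O y)) < 0"
      using ct_current_neg_iff assms unfolding eta_def by auto
  qed
qed

end
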